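(* Assume $\mathrm{cov}(\mathcal{M}) > \aleph_1$. Then there is a Tychonoff space $X$ which is not productively countably tight and such that, for each $x \in X$, player I does not have a winning strategy in the game $\mathsf{G}_1(\Omega_x, \Omega_x)$.
   Context: $\mathrm{cov}(\mathcal{M})$ is the least number of meager subsets of $\mathbb{R}$ needed to cover $\mathbb{R}$. For $x \in X$, $\Omega_x$ is the collection of all sets $A \subset X$ with $x \notin A$ and $x \in \overline{A}$. The game $\mathsf{G}_1(\Omega_x,\Omega_x)$: in each inning $n \in \omega$ player I chooses $A_n \in \Omega_x$, then player II chooses $a_n \in A_n$; II wins iff $\{a_n : n \in \omega\} \in \Omega_x$. A space is countably tight if whenever $y \in \overline{A}$ there is a countable $B \subset A$ with $y \in \overline{B}$; $X$ is productively countably tight if $X \times Y$ is countably tight for every countably tight space $Y$. *)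

theory Defs
  imports "HOL-Analysis.Analysis"
begin

definition nowhere_dense_real :: "real set \<Rightarrow> bool" where
  "nowhere_dense_real S \<longleftrightarrow> interior (closure S) = {}"

definition meager_real :: "real set \<Rightarrow> bool" where
  "meager_real S \<longleftrightarrow>
     (\<exists>N :: nat \<Rightarrow> real set. (\<forall>n. nowhere_dense_real (N n)) \<and> S \<subseteq> (\<Union>n. N n))"

definition covM_gt_aleph1 :: bool where
  "covM_gt_aleph1 \<longleftrightarrow>
     (\<forall>F :: real set set. (\<forall>M\<in>F. meager_real M) \<and> \<Union>F = UNIV
        \<longrightarrow> (card_of F, cardSuc natLeq) \<notin> ordLeq)"

definition tychonoff_space :: "'a topology \<Rightarrow> bool" where
  "tychonoff_space X \<longleftrightarrow> completely_regular_space X \<and> t1_space X"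

definition countably_tight :: "'a topology \<Rightarrow> bool" where
  "countably_tight X \<longleftrightarrow>
     (\<forall>A y. A \<subseteq> topspace X \<and> y \<in> X closure_of A \<longrightarrow>
        (\<exists>B. B \<subseteq> A \<and> countable B \<and> y \<in> X closure_of B))"

text \<open>Productive countable tightness, with the test spaces Y ranging over
  topologies on the carrier type 'b.\<close>
definition productively_countably_tight_wrt :: "'b itself \<Rightarrow> 'a topology \<Rightarrow> bool" where
  "productively_countably_tight_wrt _ X \<longleftrightarrow>
     (\<forall>Y :: 'b topology. countably_tight Y \<longrightarrow> countably_tight (prod_topology X Y))"

definition Omega_at :: "'a topology \<Rightarrow> 'a \<Rightarrow> 'a set set" where
  "Omega_at X x = {A. A \<subseteq> topspace X \<and> x \<notin> A \<and> x \<in> X closure_of A}"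

text \<open>A strategy for player I assigns to every finite sequence of previous moves of
  player II a legal move in Omega_x; it is winning if every play according to it
  (II picking a_n in the n-th move of I) is lost by II.\<close>
definition playerI_wins_G1_Omega :: "'a topology \<Rightarrow> 'a \<Rightarrow> bool" where
  "playerI_wins_G1_Omega X x \<longleftrightarrow>
     (\<exists>\<sigma> :: 'a list \<Rightarrow> 'a set.
        (\<forall>s. \<sigma> s \<in> Omega_at X x) \<and>
        (\<forall>a :: nat \<Rightarrow> 'a. (\<forall>n. a n \<in> \<sigma> (map a [0..<n])) \<longrightarrow> range a \<notin> Omega_at X x))"

end

(*
  Take an \<omega>\<^sub>1-tower T, a \<subseteq>*-decreasing sequence (T a)\<^sub>a\<^sub><\<^sub>\<omega>\<^sub>1 of infinite subsets of \<nat> with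
  T b - T a infinite for b < a, and let X be \<nat> \<union> {\<infinity>} with all points of \<nat> isolated and
  the neighbourhoods of \<infinity> generated by the sets T a - {..<k}. X is countable and
  zero-dimensional, hence Tychonoff, and \<infinity> has a local base of size \<aleph>\<^sub>1.

  Player I has no winning strategy in G\<^sub>1(\<Omega>\<^sub>x, \<Omega>\<^sub>x): since I's moves are countable, II's replies
  are coded by a sequence g \<in> \<nat>\<^sup>\<nat> of indices, and for each basic neighbourhood U of x the
  codes g whose play misses U form a nowhere dense set. Fewer than cov(\<M>) nowhere dense
  sets do not cover \<nat>\<^sup>\<nat>, so some play answering the strategy accumulates at x.

  X is not productively countably tight: in the product with the sequential fan with
  \<omega>\<^sub>1 spines (which is countably tight) the point (\<infinity>, \<infinity>) is in the closure of the diagonal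
  {(p, (a, p)) | p \<in> T a - T (a + 1)}, but every countable part of the diagonal meets only
  countably many spines, which are all almost disjoint from a single T g, so it stays away
  from U \<times> V for U generated by T g and V chosen spine by spine.
*)
theory Submission
  imports Defs "HOL-Library.Countable_Set_Type"
begin

unbundle cardinal_syntax

section \<open>The first uncountable ordinal\<close>

abbreviation omega1 :: "nat set rel" where "omega1 \<equiv> cardSuc natLeq"

lemma Card_order_omega1: "Card_order omega1"
  by (simp add: cardSuc_Card_order natLeq_Card_order)

lemma wo_rel_omega1: "wo_rel omega1"
  using Card_order_omega1 card_order_on_def wo_rel_def by blast

lemma countable_underS_omega1:
  assumes "a \<in> Field omega1" shows "countable (underS omega1 a)"
proof -
  have "|underS omega1 a| <o omega1" using card_of_underS[OF Card_order_omega1 assms] .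
  then have "|underS omega1 a| \<le>o natLeq"
    using cardSuc_ordLeq_ordLess[OF natLeq_Card_order card_of_Card_order] by blast
  then show ?thesis by (simp add: countable_card_le_natLeq)
qed

lemma uncountable_Field_omega1: "uncountable (Field omega1)"
proof
  assume "countable (Field omega1)"
  then have "|Field omega1| \<le>o natLeq" by (simp add: countable_card_le_natLeq)
  then have "omega1 \<le>o natLeq"
    using card_of_Field_ordIso[OF Card_order_omega1] ordIso_ordLeq_trans ordIso_symmetric by blast
  then show False using cardSuc_greater[OF natLeq_Card_order] not_ordLess_ordLeq by blast
qed

lemma Field_omega1_not_empty: "Field omega1 \<noteq> {}"
  using uncountable_Field_omega1 by auto

lemma omega1_linear:
  assumes "a \<in> Field omega1" "b \<in> Field omega1" "a \<noteq> b"
  shows "a \<in> underS omega1 b \<or> b \<in> underS omega1 a"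
  using assms wo_rel.TOTALS[OF wo_rel_omega1] by (auto simp: underS_def)

lemma countable_bounded_omega1:
  assumes "countable K" "K \<subseteq> Field omega1"
  obtains g where "g \<in> Field omega1" "K \<subseteq> underS omega1 g"
proof -
  let ?below = "\<Union>b\<in>K. insert b (underS omega1 b)"
  have "countable ?below" using assms countable_underS_omega1 by blast
  moreover have "?below \<subseteq> Field omega1" using assms by (auto simp: underS_def Field_def)
  ultimately obtain g where g: "g \<in> Field omega1" "g \<notin> ?below"
    using uncountable_Field_omega1 countable_subset by (metis subsetI)
  have "K \<subseteq> underS omega1 g" using g assms omega1_linear by blast
  then show thesis using g that by blast
qed

lemma countable_card_le_omega1: "countable A \<Longrightarrow> |A| \<le>o omega1"
  using countable_card_le_natLeq ordLess_imp_ordLeq[OF cardSuc_greater[OF natLeq_Card_order]]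
    ordLeq_transitive by blast

lemma card_of_Field_omega1_times_nat: "|Field omega1 \<times> (UNIV :: nat set)| \<le>o omega1"
proof (rule card_of_Sigma_ordLeq_infinite_Field)
  show "infinite (Field omega1)" using uncountable_Field_omega1 countable_finite by blast
  show "|Field omega1| \<le>o omega1"
    using card_of_Field_ordIso[OF Card_order_omega1] ordIso_imp_ordLeq by blast
  show "\<forall>i\<in>Field omega1. |UNIV :: nat set| \<le>o omega1"
    by (simp add: countable_card_le_omega1)
qed (rule Card_order_omega1)

section \<open>Towers in \<open>\<P>(\<nat>)\<close>\<close>

lemma split_infinite_set:
  assumes "infinite P"
  obtains Q where "Q \<subseteq> P" "infinite Q" "infinite (P - Q)"
proof -
  obtain f :: "nat \<Rightarrow> 'a" where f: "inj f" "range f \<subseteq> P"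
    using infinite_countable_subset assms by blast
  let ?Q = "range (\<lambda>n. f (2 * n))" and ?R = "range (\<lambda>n. f (2 * n + 1))"
  have "inj (\<lambda>n. f (2 * n))" "inj (\<lambda>n. f (2 * n + 1))"
    by (auto intro!: injI dest: injD[OF f(1)])
  then have "infinite ?Q" "infinite ?R" using range_inj_infinite by blast+
  moreover have "?R \<subseteq> P - ?Q" using f by (auto dest!: injD[OF f(1)]) presburger
  ultimately show thesis using that[of ?Q] f(2) finite_subset by blast
qed

lemma infinite_pseudo_intersection_decseq:
  fixes B :: "nat \<Rightarrow> nat set"
  assumes "decseq B" "\<And>n. infinite (B n)"
  obtains P where "infinite P" "\<And>n. finite (P - B n)"
proof -
  have "\<exists>p. \<forall>n. p n \<in> B n \<and> p n < p (Suc n)"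
  proof (rule dependent_nat_choice)
    show "\<exists>x. x \<in> B 0" using assms(2)[of 0] by (metis ex_in_conv finite.emptyI)
    show "\<exists>y. y \<in> B (Suc n) \<and> x < y" for x n
      using assms(2)[of "Suc n"] unfolding infinite_nat_iff_unbounded by blast
  qed
  then obtain p where p: "\<And>n. p n \<in> B n" "strict_mono p"
    by (auto simp: strict_mono_Suc_iff)
  have "range p - B k \<subseteq> p ` {..<k}" for k
  proof
    fix x assume "x \<in> range p - B k"
    then obtain n where n: "x = p n" "p n \<notin> B k" by blast
    have "n < k"
    proof (rule ccontr)
      assume "\<not> n < k"
      then have "B n \<subseteq> B k" using assms(1) by (simp add: decseq_def)
      then show False using p(1) n(2) by blast
    qed
    then show "x \<in> p ` {..<k}" using n(1) by blast
  qed
  then have "finite (range p - B k)" for k using finite_subset by blast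
  moreover have "infinite (range p)"
    using range_inj_infinite strict_mono_imp_inj_on[OF p(2)] by blast
  ultimately show thesis using that by blast
qed

lemma almost_chain_almost_least:
  fixes A :: "nat \<Rightarrow> 'a set"
  assumes chain: "\<And>i j. finite (A i - A j) \<or> finite (A j - A i)"
  shows "\<exists>i\<le>n. \<forall>k\<le>n. finite (A i - A k)"
proof (induction n)
  case (Suc n)
  then obtain i where i: "i \<le> n" "\<forall>k\<le>n. finite (A i - A k)" by blast
  show ?case
  proof (cases "finite (A i - A (Suc n))")
    case True
    then show ?thesis using i by (metis le_Suc_eq)
  next
    case False
    then have "finite (A (Suc n) - A i)" using chain by blast
    then have "finite (A (Suc n) - A k)" if "k \<le> n" for k
      using i(2) that finite_subset[of "A (Suc n) - A k" "(A (Suc n) - A i) \<union> (A i - A k)"]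
      by blast
    then show ?thesis by (metis Diff_cancel finite.emptyI le_Suc_eq order_refl)
  qed
qed simp

lemma infinite_pseudo_intersection_almost_chain:
  fixes \<A> :: "nat set set"
  assumes "countable \<A>" "\<And>A. A \<in> \<A> \<Longrightarrow> infinite A"
    and chain: "\<And>A B. A \<in> \<A> \<Longrightarrow> B \<in> \<A> \<Longrightarrow> finite (A - B) \<or> finite (B - A)"
  obtains P where "infinite P" "\<And>A. A \<in> \<A> \<Longrightarrow> finite (P - A)"
proof (cases "\<A> = {}")
  case False
  define A where "A = from_nat_into \<A>"
  have A: "A n \<in> \<A>" for n using False A_def from_nat_into by blast
  have range_A: "range A = \<A>" using A_def range_from_nat_into[OF False assms(1)] by simp
  define B where "B n = (\<Inter>i\<le>n. A i)" for n
  have "decseq B" by (auto simp: decseq_def B_def)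
  moreover have "infinite (B n)" for n
  proof -
    obtain i where "\<forall>k\<le>n. finite (A i - A k)"
      using almost_chain_almost_least[of A n] chain A by blast
    then have "finite (\<Union>k\<le>n. A i - A k)" by (intro finite_UN_I) auto
    moreover have "A i - B n = (\<Union>k\<le>n. A i - A k)" by (auto simp: B_def)
    ultimately have "finite (A i - B n)" by (simp only:)
    then show ?thesis using assms(2)[OF A] finite_Diff2 by blast
  qed
  ultimately obtain P where P: "infinite P" "\<And>n. finite (P - B n)"
    using infinite_pseudo_intersection_decseq by blast
  have "finite (P - A n)" for n
    using P(2)[of n] finite_subset[of "P - A n" "P - B n"] by (auto simp: B_def)
  then show thesis using that P(1) range_A by blast
qed (use that in auto)

lemma strict_pseudo_intersection_almost_chain:
  fixes \<A> :: "nat set set"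
  assumes "countable \<A>" "\<And>A. A \<in> \<A> \<Longrightarrow> infinite A"
    and "\<And>A B. A \<in> \<A> \<Longrightarrow> B \<in> \<A> \<Longrightarrow> finite (A - B) \<or> finite (B - A)"
  obtains Q where "infinite Q" "\<And>A. A \<in> \<A> \<Longrightarrow> finite (Q - A) \<and> infinite (A - Q)"
proof -
  obtain P where P: "infinite P" "\<And>A. A \<in> \<A> \<Longrightarrow> finite (P - A)"
    using infinite_pseudo_intersection_almost_chain[OF assms] by blast
  obtain Q where Q: "Q \<subseteq> P" "infinite Q" "infinite (P - Q)"
    using split_infinite_set[OF P(1)] by blast
  have "finite (Q - A) \<and> infinite (A - Q)" if "A \<in> \<A>" for A
  proof
    show "finite (Q - A)"
      by (rule finite_subset[OF _ P(2)[OF that]]) (use Q(1) in blast)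
    show "infinite (A - Q)"
    proof
      assume "finite (A - Q)"
      then have "finite ((A - Q) \<union> (P - A))" using P(2)[OF that] by blast
      moreover have "P - Q \<subseteq> (A - Q) \<union> (P - A)" by blast
      ultimately show False using Q(3) finite_subset by blast
    qed
  qed
  then show thesis using that Q(2) by blast
qed

definition omega1_tower :: "(nat set \<Rightarrow> nat set) \<Rightarrow> bool" where
  "omega1_tower T \<longleftrightarrow>
     (\<forall>a\<in>Field omega1. infinite (T a) \<and>
        (\<forall>b\<in>underS omega1 a. finite (T a - T b) \<and> infinite (T b - T a)))"

lemma exists_omega1_tower: "\<exists>T. omega1_tower T"
proof -
  define step where "step f a =
    (SOME Q. infinite Q \<and> (\<forall>b\<in>underS omega1 a. finite (Q - f b) \<and> infinite (f b - Q)))"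
    for f :: "nat set \<Rightarrow> nat set" and a
  define T where "T = wo_rel.worec omega1 step"
  have "step f a = step g a" if "\<forall>b\<in>underS omega1 a. f b = g b" for f g a
    using that unfolding step_def by simp
  then have "wo_rel.adm_wo omega1 step"
    unfolding wo_rel.adm_wo_def[OF wo_rel_omega1] by blast
  then have T_step: "T a = step T a" for a
    unfolding T_def by (metis wo_rel.worec_fixpoint[OF wo_rel_omega1])
  have "a \<in> Field omega1 \<longrightarrow>
      infinite (T a) \<and> (\<forall>b\<in>underS omega1 a. finite (T a - T b) \<and> infinite (T b - T a))" for a
  proof (induction a rule: wo_rel.well_order_induct[OF wo_rel_omega1])
    case (1 a)
    have IH: "infinite (T b) \<and> (\<forall>c\<in>underS omega1 b. finite (T b - T c) \<and> infinite (T c - T b))"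
      if b: "b \<in> underS omega1 a" for b
      by (rule 1[rule_format]) (use underS_E[OF b] underS_Field[OF b] in auto)
    have chain: "finite (T b - T c) \<or> finite (T c - T b)"
      if b: "b \<in> underS omega1 a" and c: "c \<in> underS omega1 a" for b c
    proof (cases "b = c")
      case False
      then have "b \<in> underS omega1 c \<or> c \<in> underS omega1 b"
        using omega1_linear[OF underS_Field[OF b] underS_Field[OF c]] by blast
      then show ?thesis using IH[OF b] IH[OF c] by blast
    qed simp
    show ?case
    proof
      assume "a \<in> Field omega1"
      obtain Q where Q: "infinite Q"
        "\<And>A. A \<in> T ` underS omega1 a \<Longrightarrow> finite (Q - A) \<and> infinite (A - Q)"
      proof (rule strict_pseudo_intersection_almost_chain)
        show "countable (T ` underS omega1 a)"
          using countable_underS_omega1[OF \<open>a \<in> Field omega1\<close>] by blast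
        show "infinite A" if "A \<in> T ` underS omega1 a" for A
          using that IH by blast
        show "finite (A - B) \<or> finite (B - A)"
          if "A \<in> T ` underS omega1 a" "B \<in> T ` underS omega1 a" for A B
          using that chain by blast
      qed (rule that)
      have "infinite Q \<and> (\<forall>b\<in>underS omega1 a. finite (Q - T b) \<and> infinite (T b - Q))"
        using Q by blast
      then have "infinite (step T a) \<and>
          (\<forall>b\<in>underS omega1 a. finite (step T a - T b) \<and> infinite (T b - step T a))"
        unfolding step_def by (rule someI)
      then show "infinite (T a) \<and> (\<forall>b\<in>underS omega1 a. finite (T a - T b) \<and> infinite (T b - T a))"
        using T_step[of a] by metis
    qed
  qed
  then show ?thesis unfolding omega1_tower_def by blast
qed

section \<open>Nowhere dense sets of sequences\<close>

definition dyadic_interval :: "int \<Rightarrow> nat \<Rightarrow> real set" where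
  "dyadic_interval a L = {r. \<lfloor>2 ^ L * r\<rfloor> = a}"

lemma floor_pow2_mult_div:
  assumes "L \<le> L'"
  shows "\<lfloor>(2::real) ^ L * r\<rfloor> = \<lfloor>(2::real) ^ L' * r\<rfloor> div 2 ^ (L' - L)"
proof -
  have "(2::real) ^ L' = 2 ^ L * 2 ^ (L' - L)" using assms by (simp flip: power_add)
  then have "(2::real) ^ L * r = (2 ^ L' * r) / real_of_int (2 ^ (L' - L))" by simp
  then show ?thesis using floor_divide_real_eq_div[of "2 ^ (L' - L)" "2 ^ L' * r"] by simp
qed

lemma floor_pow2_mult_dyadic_interval:
  "r \<in> dyadic_interval a L \<Longrightarrow> i \<le> L \<Longrightarrow> \<lfloor>(2::real) ^ i * r\<rfloor> = a div 2 ^ (L - i)"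
  using floor_pow2_mult_div[of i L r] by (simp add: dyadic_interval_def)

lemma dyadic_interval_subset:
  "L \<le> L' \<Longrightarrow> a' div 2 ^ (L' - L) = a \<Longrightarrow> dyadic_interval a' L' \<subseteq> dyadic_interval a L"
  using floor_pow2_mult_dyadic_interval by (auto simp: dyadic_interval_def)

lemma left_endpoint_in_dyadic_interval: "real_of_int a / 2 ^ L \<in> dyadic_interval a L"
  by (simp add: dyadic_interval_def)

lemma nowhere_dense_real_if_dyadic:
  assumes "\<And>a L. \<exists>a' L'. dyadic_interval a' L' \<subseteq> dyadic_interval a L \<and> dyadic_interval a' L' \<inter> M = {}"
  shows "nowhere_dense_real M"
  unfolding nowhere_dense_real_def
proof (rule ccontr)
  assume "interior (closure M) \<noteq> {}"
  then obtain x e where e: "e > 0" "ball x e \<subseteq> closure M"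
    using mem_interior by blast
  obtain L where L: "(1/2::real) ^ L < e" using real_arch_pow_inv[OF e(1), of "1/2"] by auto
  have "dyadic_interval \<lfloor>2 ^ L * x\<rfloor> L \<subseteq> ball x e"
  proof
    fix r assume "r \<in> dyadic_interval \<lfloor>2 ^ L * x\<rfloor> L"
    then have "\<lfloor>2 ^ L * r\<rfloor> = \<lfloor>(2::real) ^ L * x\<rfloor>" by (simp add: dyadic_interval_def)
    then have "\<bar>2 ^ L * r - 2 ^ L * x\<bar> < (1::real)"
      using floor_correct[of "2 ^ L * r"] floor_correct[of "2 ^ L * x"] by linarith
    then have "2 ^ L * \<bar>r - x\<bar> < (1::real)" by (simp add: abs_mult flip: right_diff_distrib)
    then have "\<bar>r - x\<bar> < (1/2) ^ L" by (simp add: field_simps)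
    then show "r \<in> ball x e" using L by (simp add: dist_real_def abs_minus_commute)
  qed
  then obtain a' L' where sub: "dyadic_interval a' L' \<subseteq> closure M"
    and disj: "dyadic_interval a' L' \<inter> M = {}"
    using assms e(2) by blast
  define U where "U = {real_of_int a' / 2 ^ L' <..< (real_of_int a' + 1) / 2 ^ L'}"
  have "U \<subseteq> dyadic_interval a' L'"
    by (auto simp: U_def dyadic_interval_def floor_eq_iff field_simps)
  moreover have "(real_of_int a' + 1/2) / 2 ^ L' \<in> U" by (simp add: U_def field_simps)
  ultimately have "U \<inter> closure M \<noteq> {}" using sub by blast
  then have "U \<inter> M \<noteq> {}" using open_Int_closure_eq_empty[of U M] by (auto simp: U_def)
  then show False using \<open>U \<subseteq> dyadic_interval a' L'\<close> disj by blast
qed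

lemma meager_real_if_nowhere_dense: "nowhere_dense_real S \<Longrightarrow> meager_real S"
  unfolding meager_real_def by (intro exI[of _ "\<lambda>_. S"]) auto

definition binary_digit :: "real \<Rightarrow> nat \<Rightarrow> nat" where
  "binary_digit r i = nat (\<lfloor>(2::real) ^ i * r\<rfloor> mod 2)"

primrec count_ones :: "real \<Rightarrow> nat \<Rightarrow> nat" where
  "count_ones r 0 = 0"
| "count_ones r (Suc i) = count_ones r i + binary_digit r (Suc i)"

text \<open>The \<open>n\<close>-th entry of \<open>zero_block r\<close> counts the binary digits \<open>0\<close> of \<open>r\<close> (after the binary
  point) preceded by exactly \<open>n\<close> digits \<open>1\<close>: the lengths of the blocks of zeros between
  consecutive ones. On every dyadic interval this map \<open>\<real> \<rightarrow> \<nat>\<^sup>\<nat>\<close> can be steered to prescribe any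
  next entry, which is all we need of it.\<close>
definition zero_block :: "real \<Rightarrow> nat \<Rightarrow> nat" where
  "zero_block r n = card {i. 1 \<le> i \<and> binary_digit r i = 0 \<and> count_ones r i = n}"

lemma incseq_count_ones: "incseq (count_ones r)"
  by (rule incseq_SucI) simp

lemma binary_digit_dyadic_interval:
  "r \<in> dyadic_interval a L \<Longrightarrow> i \<le> L \<Longrightarrow> binary_digit r i = nat ((a div 2 ^ (L - i)) mod 2)"
  unfolding binary_digit_def using floor_pow2_mult_dyadic_interval by metis

lemma count_ones_dyadic_interval:
  assumes "r \<in> dyadic_interval a L" "r' \<in> dyadic_interval a L" "i \<le> L"
  shows "count_ones r i = count_ones r' i"
  using assms(3) by (induction i) (simp_all add: binary_digit_dyadic_interval[OF assms(1)]
      binary_digit_dyadic_interval[OF assms(2)])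

lemma zero_block_dyadic_interval:
  assumes r: "r \<in> dyadic_interval a L" and r': "r' \<in> dyadic_interval a L"
    and n: "n < count_ones r L"
  shows "zero_block r n = zero_block r' n"
proof -
  have "i < L" if "count_ones s i = n" "s \<in> {r, r'}" for s i
    using that n count_ones_dyadic_interval[OF r r', of L] incseq_count_ones[of s]
    by (metis incseqD insert_iff linorder_not_le singletonD order.strict_iff_not)
  then have "{i. 1 \<le> i \<and> binary_digit r i = 0 \<and> count_ones r i = n} =
             {i. 1 \<le> i \<and> binary_digit r' i = 0 \<and> count_ones r' i = n}"
    using binary_digit_dyadic_interval[OF r] binary_digit_dyadic_interval[OF r']
      count_ones_dyadic_interval[OF r r'] by (metis (no_types, opaque_lifting) less_imp_le insertCI)
  then show ?thesis unfolding zero_block_def by simp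
qed

lemma binary_digit_after_odd:
  assumes "odd a" and r: "r \<in> dyadic_interval (a * 2 ^ Suc j + 1) (L + Suc j)" and t: "t \<le> Suc j"
  shows "binary_digit r (L + t) = (if t = 0 \<or> t = Suc j then 1 else 0)"
proof -
  define d :: int where "d = 2 ^ (Suc j - t)"
  have "a * 2 ^ Suc j + 1 = (a * 2 ^ t) * d + 1"
    using t by (simp add: d_def flip: power_add)
  moreover have "\<lfloor>(2::real) ^ (L + t) * r\<rfloor> = (a * 2 ^ Suc j + 1) div d"
    using floor_pow2_mult_dyadic_interval[OF r, of "L + t"] t by (simp add: d_def)
  moreover have "((a * 2 ^ t) * d + 1) div d = a * 2 ^ t + (if t = Suc j then 1 else 0)"
    using t by (cases "t = Suc j") (auto simp: d_def)
  ultimately have "\<lfloor>(2::real) ^ (L + t) * r\<rfloor> = a * 2 ^ t + (if t = Suc j then 1 else 0)"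
    by (simp only:)
  then have digit: "binary_digit r (L + t) = nat ((a * 2 ^ t + (if t = Suc j then 1 else 0)) mod 2)"
    by (simp add: binary_digit_def)
  show ?thesis
  proof (cases "t = Suc j")
    case True
    then have "odd (a * 2 ^ t + 1)" by simp
    then have "(a * 2 ^ t + 1) mod 2 = 1" using odd_iff_mod_2_eq_one by blast
    then show ?thesis using digit True by (simp del: One_nat_def)
  next
    case False
    then show ?thesis
      using digit \<open>odd a\<close> by (cases t) (simp_all add: odd_iff_mod_2_eq_one)
  qed
qed

lemma zero_block_after_odd:
  assumes "odd a" and r: "r \<in> dyadic_interval (a * 2 ^ Suc j + 1) (L + Suc j)"
  shows "zero_block r (count_ones r L) = j"
proof -
  let ?m = "count_ones r L"
  note digit = binary_digit_after_odd[OF assms]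
  have ones_mid: "count_ones r (L + t) = ?m" if "t \<le> j" for t
    using that
  proof (induction t)
    case (Suc t)
    then show ?case using digit[of "Suc t"] by simp
  qed simp
  have ones_end: "count_ones r (L + Suc j) = Suc ?m"
    using ones_mid[of j] digit[of "Suc j"] by simp
  have "{i. 1 \<le> i \<and> binary_digit r i = 0 \<and> count_ones r i = ?m} = {L + 1 .. L + j}"
  proof (intro set_eqI iffI)
    fix i assume i: "i \<in> {i. 1 \<le> i \<and> binary_digit r i = 0 \<and> count_ones r i = ?m}"
    have "\<not> i \<le> L"
    proof
      assume "i \<le> L"
      moreover have "i \<noteq> L" using i digit[of 0] by auto
      ultimately have "i < L" by simp
      then obtain k where k: "L = Suc k" "i \<le> k" by (auto dest: less_imp_Suc_add)
      then have "count_ones r i \<le> count_ones r k" using incseq_count_ones incseqD by blast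
      moreover have "count_ones r L = Suc (count_ones r k)" using k(1) digit[of 0] by simp
      ultimately show False using i by simp
    qed
    moreover have "\<not> L + Suc j \<le> i"
    proof
      assume "L + Suc j \<le> i"
      then have "count_ones r (L + Suc j) \<le> count_ones r i" using incseq_count_ones incseqD by blast
      then show False using i ones_end by simp
    qed
    ultimately show "i \<in> {L + 1 .. L + j}" by auto
  next
    fix i assume "i \<in> {L + 1 .. L + j}"
    then have "i = L + (i - L)" "1 \<le> i - L" "i - L \<le> j" by auto
    then show "i \<in> {i. 1 \<le> i \<and> binary_digit r i = 0 \<and> count_ones r i = ?m}"
      using digit[of "i - L"] ones_mid[of "i - L"] by simp
  qed
  then show ?thesis unfolding zero_block_def by simp
qed

lemma zero_block_steerable:
  obtains m c where "\<And>j. \<exists>a' L'. dyadic_interval a' L' \<subseteq> dyadic_interval a L \<and>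
      (\<forall>r\<in>dyadic_interval a' L'. (\<forall>n<m. zero_block r n = c n) \<and> zero_block r m = j)"
proof -
  define r\<^sub>0 where "r\<^sub>0 = real_of_int (2 * a + 1) / 2 ^ Suc L"
  have r\<^sub>0: "r\<^sub>0 \<in> dyadic_interval (2 * a + 1) (Suc L)"
    unfolding r\<^sub>0_def by (rule left_endpoint_in_dyadic_interval)
  have "\<exists>a' L'. dyadic_interval a' L' \<subseteq> dyadic_interval a L \<and>
      (\<forall>r\<in>dyadic_interval a' L'. (\<forall>n<count_ones r\<^sub>0 (Suc L). zero_block r n = zero_block r\<^sub>0 n) \<and>
         zero_block r (count_ones r\<^sub>0 (Suc L)) = j)" for j
  proof (intro exI conjI ballI)
    let ?a' = "(2 * a + 1) * 2 ^ Suc j + 1" and ?L' = "Suc L + Suc j"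
    have sub: "dyadic_interval ?a' ?L' \<subseteq> dyadic_interval (2 * a + 1) (Suc L)"
      by (rule dyadic_interval_subset) (simp_all add: div_pos_pos_trivial one_less_power del: power_Suc)
    also have "\<dots> \<subseteq> dyadic_interval a L"
      by (rule dyadic_interval_subset) simp_all
    finally show "dyadic_interval ?a' ?L' \<subseteq> dyadic_interval a L" .
    fix r assume r: "r \<in> dyadic_interval ?a' ?L'"
    then have r': "r \<in> dyadic_interval (2 * a + 1) (Suc L)" using sub by blast
    show "\<forall>n<count_ones r\<^sub>0 (Suc L). zero_block r n = zero_block r\<^sub>0 n"
      using zero_block_dyadic_interval[OF r\<^sub>0 r'] by simp
    have "zero_block r (count_ones r (Suc L)) = j"
      by (rule zero_block_after_odd[OF _ r]) simp
    then show "zero_block r (count_ones r\<^sub>0 (Suc L)) = j"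
      using count_ones_dyadic_interval[OF r\<^sub>0 r' order_refl] by simp
  qed
  then show thesis using that by blast
qed

text \<open>Countably many sets which are nowhere dense in the Baire space \<open>\<nat>\<^sup>\<nat>\<close> in the following
  strong sense cannot cover it as long as \<open>cov(\<M>) > \<aleph>\<^sub>1\<close>: every basic open set, given by a
  prefix \<open>c\<^sub>0, \<dots>, c\<^sub>m\<^sub>-\<^sub>1\<close>, has a one-step extension missing \<open>N i\<close>.\<close>
lemma sequence_avoiding_nowhere_dense:
  fixes N :: "'i \<Rightarrow> (nat \<Rightarrow> nat) set"
  assumes "covM_gt_aleph1" "|I| \<le>o omega1"
    and nowhere_dense: "\<And>i m c. i \<in> I \<Longrightarrow> \<exists>j. \<forall>g. (\<forall>n<m. g n = c n) \<and> g m = j \<longrightarrow> g \<notin> N i"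
  obtains g where "\<And>i. i \<in> I \<Longrightarrow> g \<notin> N i"
proof -
  define M where "M i = {r. zero_block r \<in> N i}" for i
  have "nowhere_dense_real (M i)" if i: "i \<in> I" for i
  proof (rule nowhere_dense_real_if_dyadic)
    fix a L
    obtain m c where steer: "\<And>j. \<exists>a' L'. dyadic_interval a' L' \<subseteq> dyadic_interval a L \<and>
      (\<forall>r\<in>dyadic_interval a' L'. (\<forall>n<m. zero_block r n = c n) \<and> zero_block r m = j)"
      using zero_block_steerable by blast
    obtain j where "\<forall>g. (\<forall>n<m. g n = c n) \<and> g m = j \<longrightarrow> g \<notin> N i"
      using nowhere_dense[OF i] by blast
    then show "\<exists>a' L'. dyadic_interval a' L' \<subseteq> dyadic_interval a L \<and> dyadic_interval a' L' \<inter> M i = {}"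
      using steer[of j] unfolding M_def by blast
  qed
  then have "\<forall>S\<in>M ` I. meager_real S" by (auto intro: meager_real_if_nowhere_dense)
  moreover have "|M ` I| \<le>o omega1" by (rule ordLeq_transitive[OF card_of_image assms(2)])
  ultimately have "\<Union>(M ` I) \<noteq> UNIV"
    using assms(1) unfolding covM_gt_aleph1_def by blast
  then show thesis using that unfolding M_def by blast
qed

section \<open>Spaces with a single non-isolated point\<close>

definition filter_space :: "'a set \<Rightarrow> 'a \<Rightarrow> 'a set set \<Rightarrow> 'a topology" where
  "filter_space P z \<B> = topology (\<lambda>U. U \<subseteq> insert z P \<and> (z \<in> U \<longrightarrow> (\<exists>B\<in>\<B>. B \<subseteq> U)))"

definition free_filter_base :: "'a set \<Rightarrow> 'a \<Rightarrow> 'a set set \<Rightarrow> bool" where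
  "free_filter_base P z \<B> \<longleftrightarrow> z \<notin> P \<and> \<B> \<noteq> {} \<and> (\<forall>B\<in>\<B>. B \<subseteq> P) \<and>
     (\<forall>B\<^sub>1\<in>\<B>. \<forall>B\<^sub>2\<in>\<B>. \<exists>B\<in>\<B>. B \<subseteq> B\<^sub>1 \<inter> B\<^sub>2) \<and> (\<forall>p\<in>P. \<exists>B\<in>\<B>. p \<notin> B)"

lemma free_filter_baseD:
  assumes "free_filter_base P z \<B>"
  shows "z \<notin> P" "\<B> \<noteq> {}" "\<And>B. B \<in> \<B> \<Longrightarrow> B \<subseteq> P"
    "\<And>B\<^sub>1 B\<^sub>2. B\<^sub>1 \<in> \<B> \<Longrightarrow> B\<^sub>2 \<in> \<B> \<Longrightarrow> \<exists>B\<in>\<B>. B \<subseteq> B\<^sub>1 \<inter> B\<^sub>2"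
    "\<And>p. p \<in> P \<Longrightarrow> \<exists>B\<in>\<B>. p \<notin> B"
  using assms unfolding free_filter_base_def by blast+

context
  fixes P :: "'a set" and z :: 'a and \<B> :: "'a set set"
  assumes base: "free_filter_base P z \<B>"
begin

lemma openin_filter_space:
  "openin (filter_space P z \<B>) U \<longleftrightarrow> U \<subseteq> insert z P \<and> (z \<in> U \<longrightarrow> (\<exists>B\<in>\<B>. B \<subseteq> U))"
proof -
  define nbhd where "nbhd = (\<lambda>U. U \<subseteq> insert z P \<and> (z \<in> U \<longrightarrow> (\<exists>B\<in>\<B>. B \<subseteq> U)))"
  have "nbhd (S \<inter> T)" if S: "nbhd S" and T: "nbhd T" for S T
  proof -
    have "\<exists>B\<in>\<B>. B \<subseteq> S \<inter> T" if z: "z \<in> S \<inter> T"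
    proof -
      obtain B\<^sub>1 B\<^sub>2 where "B\<^sub>1 \<in> \<B>" "B\<^sub>2 \<in> \<B>" "B\<^sub>1 \<subseteq> S" "B\<^sub>2 \<subseteq> T"
        using S T z unfolding nbhd_def by auto
      moreover obtain B where "B \<in> \<B>" "B \<subseteq> B\<^sub>1 \<inter> B\<^sub>2"
        using free_filter_baseD(4)[OF base] calculation(1,2) by meson
      ultimately show ?thesis by blast
    qed
    then show ?thesis using S unfolding nbhd_def by auto
  qed
  moreover have "nbhd (\<Union>\<K>)" if \<K>: "\<forall>U\<in>\<K>. nbhd U" for \<K>
  proof -
    have "\<exists>B\<in>\<B>. B \<subseteq> \<Union>\<K>" if z: "z \<in> \<Union>\<K>"
    proof -
      obtain U where "U \<in> \<K>" "z \<in> U" using z by blast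
      then obtain B where "B \<in> \<B>" "B \<subseteq> U" using \<K> unfolding nbhd_def by auto
      then show ?thesis using \<open>U \<in> \<K>\<close> by blast
    qed
    then show ?thesis using \<K> unfolding nbhd_def by auto
  qed
  ultimately have "istopology nbhd" unfolding istopology_def by blast
  then have "openin (filter_space P z \<B>) = nbhd"
    unfolding filter_space_def nbhd_def[symmetric] by simp
  then show ?thesis by (simp add: nbhd_def)
qed

lemma topspace_filter_space: "topspace (filter_space P z \<B>) = insert z P"
proof -
  obtain B where "B \<in> \<B>" "B \<subseteq> P" using free_filter_baseD(2,3)[OF base] by blast
  then have "openin (filter_space P z \<B>) (insert z P)" by (auto simp: openin_filter_space)
  then have "insert z P \<subseteq> topspace (filter_space P z \<B>)" by (rule openin_subset)
  moreover have "topspace (filter_space P z \<B>) \<subseteq> insert z P"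
    using openin_topspace[of "filter_space P z \<B>"] unfolding openin_filter_space by blast
  ultimately show ?thesis by blast
qed

lemma openin_filter_space_singleton: "p \<in> P \<Longrightarrow> openin (filter_space P z \<B>) {p}"
  using free_filter_baseD(1)[OF base] by (auto simp: openin_filter_space)

lemma openin_filter_space_base: "B \<in> \<B> \<Longrightarrow> openin (filter_space P z \<B>) (insert z B)"
  using free_filter_baseD(3)[OF base] by (auto simp: openin_filter_space)

lemma in_closure_of_filter_space:
  "x \<in> filter_space P z \<B> closure_of A \<longleftrightarrow>
     x \<in> insert z P \<and> (x \<in> A \<or> x = z \<and> (\<forall>B\<in>\<B>. B \<inter> A \<noteq> {}))"
  (is "?lhs \<longleftrightarrow> ?rhs")
proof
  assume ?lhs
  then have x: "x \<in> insert z P"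
    and meets: "\<And>U. x \<in> U \<Longrightarrow> openin (filter_space P z \<B>) U \<Longrightarrow> \<exists>y\<in>A. y \<in> U"
    unfolding in_closure_of topspace_filter_space by blast+
  show ?rhs
  proof (cases "x \<in> A \<or> x = z")
    case False
    then show ?thesis using x meets[of "{x}"] openin_filter_space_singleton by blast
  next
    case True
    have "B \<inter> A \<noteq> {}" if "x \<notin> A" "B \<in> \<B>" for B
      using meets[of "insert z B"] openin_filter_space_base[OF \<open>B \<in> \<B>\<close>] True that by blast
    then show ?thesis using x True by blast
  qed
next
  assume ?rhs
  then show ?lhs
    unfolding in_closure_of topspace_filter_space openin_filter_space by blast
qed

lemma closedin_filter_space_singleton:
  assumes "x \<in> insert z P" shows "closedin (filter_space P z \<B>) {x}"
proof -
  obtain B where B: "B \<in> \<B>" "x \<notin> B"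
  proof (cases "x = z")
    case True
    then show thesis
      using that free_filter_baseD(1-3)[OF base] by (metis all_not_in_conv subsetD)
  next
    case False
    then show thesis using that assms free_filter_baseD(5)[OF base] by blast
  qed
  then have "B \<subseteq> insert z P - {x}" using free_filter_baseD(3)[OF base] by blast
  then have "openin (filter_space P z \<B>) (insert z P - {x})"
    using B(1) unfolding openin_filter_space by blast
  then show ?thesis using assms by (simp add: closedin_def topspace_filter_space)
qed

lemma dim_le_0_filter_space: "filter_space P z \<B> dim_le 0"
  unfolding dimension_le_0_neighbourhood_base_of_clopen
proof (subst open_neighbourhood_base_of, blast, intro allI impI)
  let ?X = "filter_space P z \<B>"
  fix W x assume W: "openin ?X W \<and> x \<in> W"
  show "\<exists>U. (closedin ?X U \<and> openin ?X U) \<and> x \<in> U \<and> U \<subseteq> W"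
  proof (cases "x = z")
    case True
    then obtain B where "B \<in> \<B>" "B \<subseteq> W" using W unfolding openin_filter_space by blast
    moreover have "openin ?X (insert z P - insert z B)"
      using free_filter_baseD(1)[OF base] by (auto simp: openin_filter_space)
    then have "closedin ?X (insert z B)"
      using free_filter_baseD(3)[OF base] \<open>B \<in> \<B>\<close>
      by (auto simp: closedin_def topspace_filter_space)
    ultimately show ?thesis
      using True W openin_filter_space_base by blast
  next
    case False
    then have "x \<in> P" using W openin_subset topspace_filter_space by blast
    then show ?thesis
      using W closedin_filter_space_singleton[of x] openin_filter_space_singleton[of x] by blast
  qed
qed

lemma tychonoff_space_filter_space: "tychonoff_space (filter_space P z \<B>)"
proof -
  have "t1_space (filter_space P z \<B>)"
    unfolding t1_space_closedin_singleton topspace_filter_space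
    using closedin_filter_space_singleton by blast
  then show ?thesis
    using zero_dimensional_imp_completely_regular_space[OF dim_le_0_filter_space]
    by (simp add: tychonoff_space_def)
qed

end

section \<open>The game \<open>G\<^sub>1(\<Omega>\<^sub>x, \<Omega>\<^sub>x)\<close> on spaces of small character\<close>

primrec history_by_indices :: "('a list \<Rightarrow> nat \<Rightarrow> 'a) \<Rightarrow> (nat \<Rightarrow> nat) \<Rightarrow> nat \<Rightarrow> 'a list" where
  "history_by_indices e g 0 = []"
| "history_by_indices e g (Suc n) =
     history_by_indices e g n @ [e (history_by_indices e g n) (g n)]"

definition play_by_indices :: "('a list \<Rightarrow> nat \<Rightarrow> 'a) \<Rightarrow> (nat \<Rightarrow> nat) \<Rightarrow> nat \<Rightarrow> 'a" where
  "play_by_indices e g n = e (history_by_indices e g n) (g n)"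

lemma history_by_indices_eq_map: "history_by_indices e g n = map (play_by_indices e g) [0..<n]"
  by (induction n) (simp_all add: play_by_indices_def)

lemma history_by_indices_cong:
  "(\<And>i. i < n \<Longrightarrow> g i = g' i) \<Longrightarrow> history_by_indices e g n = history_by_indices e g' n"
  by (induction n) auto

text \<open>Player II answers the strategy \<open>\<sigma>\<close> by choosing, in inning \<open>n\<close>, the \<open>g n\<close>-th element of
  I's (countable) move. For a fixed basic neighbourhood \<open>U\<close> of \<open>x\<close>, the index sequences \<open>g\<close> whose
  play misses \<open>U\<close> form a nowhere dense set in \<open>\<nat>\<^sup>\<nat>\<close>, and fewer than \<open>cov(\<M>)\<close> such sets cannot
  cover \<open>\<nat>\<^sup>\<nat>\<close>.\<close>
lemma not_playerI_wins_G1_Omega_if_small_local_base: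
  assumes "covM_gt_aleph1" "countable (topspace X)" "x \<in> topspace X"
    and base_open: "\<And>U. U \<in> \<U> \<Longrightarrow> openin X U \<and> x \<in> U"
    and base_nbhd: "\<And>V. openin X V \<Longrightarrow> x \<in> V \<Longrightarrow> \<exists>U\<in>\<U>. U \<subseteq> V"
    and "|\<U>| \<le>o omega1"
  shows "\<not> playerI_wins_G1_Omega X x"
proof
  assume "playerI_wins_G1_Omega X x"
  then obtain \<sigma> where \<sigma>_Omega: "\<And>s. \<sigma> s \<in> Omega_at X x"
    and wins: "\<And>a. \<forall>n. a n \<in> \<sigma> (map a [0..<n]) \<Longrightarrow> range a \<notin> Omega_at X x"
    unfolding playerI_wins_G1_Omega_def by blast
  then have \<sigma>: "\<sigma> s \<subseteq> topspace X \<and> x \<notin> \<sigma> s \<and> x \<in> X closure_of \<sigma> s" for s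
    unfolding Omega_at_def by blast
  have closure: "x \<in> X closure_of A \<longleftrightarrow> (\<forall>U\<in>\<U>. U \<inter> A \<noteq> {})" for A
  proof
    assume "x \<in> X closure_of A"
    then show "\<forall>U\<in>\<U>. U \<inter> A \<noteq> {}" using base_open by (auto simp: in_closure_of)
  next
    assume meets: "\<forall>U\<in>\<U>. U \<inter> A \<noteq> {}"
    have "\<exists>y. y \<in> A \<and> y \<in> V" if "x \<in> V" "openin X V" for V
      using base_nbhd[OF that(2,1)] meets by blast
    then show "x \<in> X closure_of A" using assms(3) by (auto simp: in_closure_of)
  qed
  have meets: "U \<inter> \<sigma> s \<noteq> {}" if "U \<in> \<U>" for U s
    using \<sigma>[of s] closure that by blast
  define e where "e s = from_nat_into (\<sigma> s)" for s
  obtain U\<^sub>0 where "U\<^sub>0 \<in> \<U>" using base_nbhd[OF openin_topspace assms(3)] by blast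
  then have "\<sigma> s \<noteq> {}" for s using meets by blast
  moreover have "countable (\<sigma> s)" for s using \<sigma>[of s] assms(2) countable_subset by blast
  ultimately have range_e: "range (e s) = \<sigma> s" for s
    unfolding e_def by (rule range_from_nat_into)
  let ?N = "\<lambda>U. {g. U \<inter> range (play_by_indices e g) = {}}"
  have "\<exists>j. \<forall>g. (\<forall>n<m. g n = c n) \<and> g m = j \<longrightarrow> g \<notin> ?N U" if U: "U \<in> \<U>" for U m c
  proof -
    have "U \<inter> range (e (history_by_indices e c m)) \<noteq> {}"
      using meets[OF U] range_e by simp
    then obtain j where j: "e (history_by_indices e c m) j \<in> U" by blast
    have "play_by_indices e g m \<in> U" if "\<forall>n<m. g n = c n" "g m = j" for g
      using that j history_by_indices_cong[of m g c e] by (simp add: play_by_indices_def)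
    then show ?thesis by blast
  qed
  then have "\<exists>g. \<forall>U\<in>\<U>. U \<inter> range (play_by_indices e g) \<noteq> {}"
    by (rule sequence_avoiding_nowhere_dense[OF assms(1,6), where N = ?N]) auto
  then obtain g where g: "\<And>U. U \<in> \<U> \<Longrightarrow> U \<inter> range (play_by_indices e g) \<noteq> {}"
    by blast
  let ?a = "play_by_indices e g"
  have legal: "?a n \<in> \<sigma> (map ?a [0..<n])" for n
    using range_e[of "map ?a [0..<n]"]
    unfolding play_by_indices_def[of e g n] history_by_indices_eq_map by blast
  then have "range ?a \<subseteq> topspace X" "x \<notin> range ?a" using \<sigma> by blast+
  moreover have "x \<in> X closure_of range ?a" using g closure by blast
  ultimately have "range ?a \<in> Omega_at X x" unfolding Omega_at_def by blast
  then show False using wins legal by blast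
qed

lemma not_playerI_wins_G1_Omega_filter_space:
  assumes "covM_gt_aleph1" and base: "free_filter_base P z \<B>" and "countable P"
    and "|\<B>| \<le>o omega1" and x: "x \<in> insert z P"
  shows "\<not> playerI_wins_G1_Omega (filter_space P z \<B>) x"
proof -
  let ?X = "filter_space P z \<B>"
  have countable: "countable (topspace ?X)" and x': "x \<in> topspace ?X"
    using \<open>countable P\<close> x by (simp_all add: topspace_filter_space[OF base])
  show ?thesis
  proof (cases "x = z")
    case True
    show ?thesis
    proof (rule not_playerI_wins_G1_Omega_if_small_local_base[OF assms(1) countable x',
          where \<U> = "insert z ` \<B>"])
      show "openin ?X U \<and> x \<in> U" if "U \<in> insert z ` \<B>" for U
        using that True openin_filter_space_base[OF base] by blast
      show "\<exists>U\<in>insert z ` \<B>. U \<subseteq> V" if V: "openin ?X V" "x \<in> V" for V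
      proof -
        obtain B where "B \<in> \<B>" "B \<subseteq> V"
          using V True unfolding openin_filter_space[OF base] by blast
        moreover have "insert z B \<subseteq> V" using \<open>B \<subseteq> V\<close> V(2) True by blast
        ultimately show ?thesis by blast
      qed
      show "|insert z ` \<B>| \<le>o omega1"
        by (rule ordLeq_transitive[OF card_of_image assms(4)])
    qed
  next
    case False
    then have "x \<in> P" using x by blast
    show ?thesis
    proof (rule not_playerI_wins_G1_Omega_if_small_local_base[OF assms(1) countable x',
          where \<U> = "{{x}}"])
      show "openin ?X U \<and> x \<in> U" if "U \<in> {{x}}" for U
        using that openin_filter_space_singleton[OF base \<open>x \<in> P\<close>] by blast
      show "\<exists>U\<in>{{x}}. U \<subseteq> V" if "openin ?X V" "x \<in> V" for V
        using that by blast
      show "|{{x}}| \<le>o omega1" by (simp add: countable_card_le_omega1)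
    qed
  qed
qed

section \<open>The tower space and the fan\<close>

definition tower_base :: "(nat \<Rightarrow> 'a) \<Rightarrow> (nat set \<Rightarrow> nat set) \<Rightarrow> 'a set set" where
  "tower_base \<iota> T = (\<lambda>(a, k). \<iota> ` (T a - {..<k})) ` (Field omega1 \<times> UNIV)"

definition fan_base :: "(nat set \<times> nat \<Rightarrow> 'a) \<Rightarrow> 'a set set" where
  "fan_base \<kappa> = range (\<lambda>f. \<kappa> ` {(a, n). a \<in> Field omega1 \<and> f a \<le> n})"

abbreviation tower_space :: "(nat \<Rightarrow> 'a) \<Rightarrow> 'a \<Rightarrow> (nat set \<Rightarrow> nat set) \<Rightarrow> 'a topology" where
  "tower_space \<iota> z T \<equiv> filter_space (range \<iota>) z (tower_base \<iota> T)"

abbreviation fan_space :: "(nat set \<times> nat \<Rightarrow> 'a) \<Rightarrow> 'a \<Rightarrow> 'a topology" where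
  "fan_space \<kappa> w \<equiv> filter_space (\<kappa> ` (Field omega1 \<times> UNIV)) w (fan_base \<kappa>)"

lemma omega1_tower_directed:
  assumes "omega1_tower T" "a \<in> Field omega1" "b \<in> Field omega1"
  obtains c where "c \<in> Field omega1" "finite (T c - T a)" "finite (T c - T b)"
proof (cases "a = b")
  case False
  then consider "a \<in> underS omega1 b" | "b \<in> underS omega1 a"
    using omega1_linear assms(2,3) by blast
  then show thesis
  proof cases
    case 1
    then have "finite (T b - T a)" using assms(1,3) unfolding omega1_tower_def by blast
    then show thesis using that[OF assms(3)] by simp
  next
    case 2
    then have "finite (T a - T b)" using assms(1,2) unfolding omega1_tower_def by blast
    then show thesis using that[OF assms(2)] by simp
  qed
qed (use that[OF assms(2)] in simp)

lemma free_filter_base_tower: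
  assumes "inj \<iota>" "z \<notin> range \<iota>" "omega1_tower T"
  shows "free_filter_base (range \<iota>) z (tower_base \<iota> T)"
  unfolding free_filter_base_def
proof (intro conjI ballI)
  show "z \<notin> range \<iota>" by fact
  show "tower_base \<iota> T \<noteq> {}"
    using Field_omega1_not_empty by (simp add: tower_base_def)
  show "B \<subseteq> range \<iota>" if "B \<in> tower_base \<iota> T" for B
    using that by (auto simp: tower_base_def)
next
  fix B\<^sub>1 B\<^sub>2 assume "B\<^sub>1 \<in> tower_base \<iota> T" "B\<^sub>2 \<in> tower_base \<iota> T"
  then obtain a k b l where ab: "a \<in> Field omega1" "b \<in> Field omega1"
    and B: "B\<^sub>1 = \<iota> ` (T a - {..<k})" "B\<^sub>2 = \<iota> ` (T b - {..<l})"
    by (auto simp: tower_base_def)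
  obtain c where c: "c \<in> Field omega1" "finite (T c - T a)" "finite (T c - T b)"
    using omega1_tower_directed[OF assms(3) ab] .
  obtain K where K: "\<forall>x\<in>(T c - T a) \<union> (T c - T b) \<union> {..<k} \<union> {..<l}. x < K"
    using c(2,3) finite_nat_set_iff_bounded by (metis finite_Un finite_lessThan)
  have "T c - {..<K} \<subseteq> (T a - {..<k}) \<inter> (T b - {..<l})"
    using K by (auto simp: not_less)
  then have "\<iota> ` (T c - {..<K}) \<subseteq> B\<^sub>1 \<inter> B\<^sub>2" using B by blast
  moreover have "\<iota> ` (T c - {..<K}) \<in> tower_base \<iota> T"
    using c(1) by (force simp: tower_base_def)
  ultimately show "\<exists>B\<in>tower_base \<iota> T. B \<subseteq> B\<^sub>1 \<inter> B\<^sub>2" by blast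
next
  fix p assume "p \<in> range \<iota>"
  then obtain n where n: "p = \<iota> n" by blast
  obtain a where a: "a \<in> Field omega1" using Field_omega1_not_empty by blast
  have "\<iota> ` (T a - {..<Suc n}) \<in> tower_base \<iota> T"
    using a by (force simp: tower_base_def)
  moreover have "p \<notin> \<iota> ` (T a - {..<Suc n})"
  proof
    assume "p \<in> \<iota> ` (T a - {..<Suc n})"
    then obtain m where "m \<in> T a - {..<Suc n}" "p = \<iota> m" by blast
    moreover have "m = n" using calculation(2) n injD[OF assms(1)] by metis
    ultimately show False by simp
  qed
  ultimately show "\<exists>B\<in>tower_base \<iota> T. p \<notin> B" by blast
qed

lemma free_filter_base_fan:
  assumes "inj \<kappa>" "w \<notin> range \<kappa>"
  shows "free_filter_base (\<kappa> ` (Field omega1 \<times> UNIV)) w (fan_base \<kappa>)"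
  unfolding free_filter_base_def
proof (intro conjI ballI)
  show "w \<notin> \<kappa> ` (Field omega1 \<times> UNIV)" using assms(2) by blast
  show "fan_base \<kappa> \<noteq> {}" by (simp add: fan_base_def)
  show "B \<subseteq> \<kappa> ` (Field omega1 \<times> UNIV)" if "B \<in> fan_base \<kappa>" for B
    using that by (auto simp: fan_base_def)
next
  fix B\<^sub>1 B\<^sub>2 assume "B\<^sub>1 \<in> fan_base \<kappa>" "B\<^sub>2 \<in> fan_base \<kappa>"
  then obtain f g where B: "B\<^sub>1 = \<kappa> ` {(a, n). a \<in> Field omega1 \<and> f a \<le> n}"
    "B\<^sub>2 = \<kappa> ` {(a, n). a \<in> Field omega1 \<and> g a \<le> n}"
    by (auto simp: fan_base_def)
  let ?h = "\<lambda>a. max (f a) (g a)"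
  have "\<kappa> ` {(a, n). a \<in> Field omega1 \<and> ?h a \<le> n} \<in> fan_base \<kappa>"
    unfolding fan_base_def by (rule rangeI)
  moreover have "\<kappa> ` {(a, n). a \<in> Field omega1 \<and> ?h a \<le> n} \<subseteq> B\<^sub>1 \<inter> B\<^sub>2"
    using B by auto
  ultimately show "\<exists>B\<in>fan_base \<kappa>. B \<subseteq> B\<^sub>1 \<inter> B\<^sub>2" by blast
next
  fix p assume "p \<in> \<kappa> ` (Field omega1 \<times> UNIV)"
  then obtain a n where n: "p = \<kappa> (a, n)" by blast
  have "\<kappa> ` {(a, m). a \<in> Field omega1 \<and> (\<lambda>_. Suc n) a \<le> m} \<in> fan_base \<kappa>"
    unfolding fan_base_def by (rule rangeI)
  moreover have "p \<notin> \<kappa> ` {(a, m). a \<in> Field omega1 \<and> (\<lambda>_. Suc n) a \<le> m}"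
  proof
    assume "p \<in> \<kappa> ` {(a, m). a \<in> Field omega1 \<and> (\<lambda>_. Suc n) a \<le> m}"
    then obtain a' m where "Suc n \<le> m" "p = \<kappa> (a', m)" by blast
    moreover have "(a', m) = (a, n)" using calculation(2) n injD[OF assms(1)] by metis
    ultimately show False by simp
  qed
  ultimately show "\<exists>B\<in>fan_base \<kappa>. p \<notin> B" by blast
qed

lemma countably_tight_fan:
  assumes "inj \<kappa>" "w \<notin> range \<kappa>"
  shows "countably_tight (fan_space \<kappa> w)" (is "countably_tight ?Y")
  unfolding countably_tight_def
proof (intro allI impI)
  note base = free_filter_base_fan[OF assms]
  fix A y assume "A \<subseteq> topspace ?Y \<and> y \<in> ?Y closure_of A"
  then have y: "y \<in> insert w (\<kappa> ` (Field omega1 \<times> UNIV))"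
    and closure: "y \<in> A \<or> y = w \<and> (\<forall>B\<in>fan_base \<kappa>. B \<inter> A \<noteq> {})"
    unfolding in_closure_of_filter_space[OF base] by blast+
  show "\<exists>C. C \<subseteq> A \<and> countable C \<and> y \<in> ?Y closure_of C"
  proof (cases "y \<in> A")
    case True
    then show ?thesis using y by (intro exI[of _ "{y}"]) (simp add: in_closure_of_filter_space[OF base])
  next
    case False
    then have "y = w" and meets: "\<And>B. B \<in> fan_base \<kappa> \<Longrightarrow> B \<inter> A \<noteq> {}"
      using closure by blast+
    define spine where "spine a = {n. \<kappa> (a, n) \<in> A}" for a
    have "\<exists>a\<in>Field omega1. infinite (spine a)"
    proof (rule ccontr)
      assume "\<not> (\<exists>a\<in>Field omega1. infinite (spine a))"
      then have "\<exists>m. \<forall>n\<in>spine a. n < m" if "a \<in> Field omega1" for a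
        using that finite_nat_set_iff_bounded by blast
      then obtain f where f: "\<And>a n. a \<in> Field omega1 \<Longrightarrow> n \<in> spine a \<Longrightarrow> n < f a"
        by metis
      have "\<kappa> ` {(a, n). a \<in> Field omega1 \<and> f a \<le> n} \<inter> A \<noteq> {}"
        using meets unfolding fan_base_def by blast
      then obtain a n where "a \<in> Field omega1" "f a \<le> n" "n \<in> spine a"
        unfolding spine_def by blast
      then show False using f by fastforce
    qed
    then obtain a where a: "a \<in> Field omega1" "infinite (spine a)" by blast
    let ?C = "(\<lambda>n. \<kappa> (a, n)) ` spine a"
    have "B \<inter> ?C \<noteq> {}" if B: "B \<in> fan_base \<kappa>" for B
    proof -
      obtain f where f: "B = \<kappa> ` {(a, n). a \<in> Field omega1 \<and> f a \<le> n}"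
        using B unfolding fan_base_def by blast
      obtain n where "n \<in> spine a" "f a < n"
        using a(2) unfolding infinite_nat_iff_unbounded by blast
      then have "\<kappa> (a, n) \<in> B \<inter> ?C" using f a(1) by auto
      then show ?thesis by blast
    qed
    then have "y \<in> ?Y closure_of ?C"
      using \<open>y = w\<close> by (simp add: in_closure_of_filter_space[OF base])
    moreover have "?C \<subseteq> A" unfolding spine_def by blast
    ultimately show ?thesis by blast
  qed
qed

definition tower_fan_diagonal ::
    "(nat \<Rightarrow> 'a) \<Rightarrow> (nat set \<times> nat \<Rightarrow> 'b) \<Rightarrow> (nat set \<Rightarrow> nat set) \<Rightarrow> ('a \<times> 'b) set" where
  "tower_fan_diagonal \<iota> \<kappa> E = {(\<iota> p, \<kappa> (a, p)) | a p. a \<in> Field omega1 \<and> p \<in> E a}"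

context
  fixes \<iota> :: "nat \<Rightarrow> 'a" and z :: 'a and T :: "nat set \<Rightarrow> nat set"
    and \<kappa> :: "nat set \<times> nat \<Rightarrow> 'b" and w :: 'b
  assumes \<iota>: "inj \<iota>" "z \<notin> range \<iota>" and T: "omega1_tower T"
    and \<kappa>: "inj \<kappa>" "w \<notin> range \<kappa>"
begin

lemma in_closure_of_tower_fan_diagonal:
  assumes "\<And>a. a \<in> Field omega1 \<Longrightarrow> E a \<subseteq> T a \<and> infinite (E a)"
  shows "(z, w) \<in> prod_topology (tower_space \<iota> z T) (fan_space \<kappa> w) closure_of tower_fan_diagonal \<iota> \<kappa> E"
  unfolding in_closure_of
proof (intro conjI allI impI)
  note baseX = free_filter_base_tower[OF \<iota> T] and baseY = free_filter_base_fan[OF \<kappa>]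
  show "(z, w) \<in> topspace (prod_topology (tower_space \<iota> z T) (fan_space \<kappa> w))"
    by (simp add: topspace_filter_space[OF baseX] topspace_filter_space[OF baseY])
  fix W assume "(z, w) \<in> W \<and> openin (prod_topology (tower_space \<iota> z T) (fan_space \<kappa> w)) W"
  then obtain U V where UV: "openin (tower_space \<iota> z T) U" "openin (fan_space \<kappa> w) V"
    "z \<in> U" "w \<in> V" "U \<times> V \<subseteq> W"
    unfolding openin_prod_topology_alt by blast
  obtain B where "B \<in> tower_base \<iota> T" "B \<subseteq> U"
    using UV(1,3) unfolding openin_filter_space[OF baseX] by blast
  then obtain b k where b: "b \<in> Field omega1" "\<iota> ` (T b - {..<k}) \<subseteq> U"
    unfolding tower_base_def by blast
  obtain B' where "B' \<in> fan_base \<kappa>" "B' \<subseteq> V"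
    using UV(2,4) unfolding openin_filter_space[OF baseY] by blast
  then obtain f where f: "\<kappa> ` {(a, n). a \<in> Field omega1 \<and> f a \<le> n} \<subseteq> V"
    unfolding fan_base_def by blast
  obtain p where p: "p \<in> E b" "max k (f b) < p"
    using assms[OF b(1)] unfolding infinite_nat_iff_unbounded by blast
  have "p \<in> T b - {..<k}" using p assms[OF b(1)] by auto
  then have "\<iota> p \<in> U" using b(2) by blast
  moreover have "\<kappa> (b, p) \<in> V" using p b(1) f by auto
  moreover have "(\<iota> p, \<kappa> (b, p)) \<in> tower_fan_diagonal \<iota> \<kappa> E"
    unfolding tower_fan_diagonal_def using b(1) p(1) by blast
  ultimately show "\<exists>y. y \<in> tower_fan_diagonal \<iota> \<kappa> E \<and> y \<in> W" using UV(5) by blast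
qed

lemma not_in_closure_of_countable_tower_fan_diagonal:
  assumes disjoint: "\<And>a. a \<in> Field omega1 \<Longrightarrow> \<exists>b\<in>Field omega1. E a \<inter> T b = {}"
    and C: "C \<subseteq> tower_fan_diagonal \<iota> \<kappa> E" "countable C"
  shows "(z, w) \<notin> prod_topology (tower_space \<iota> z T) (fan_space \<kappa> w) closure_of C"
proof
  note baseX = free_filter_base_tower[OF \<iota> T] and baseY = free_filter_base_fan[OF \<kappa>]
  assume closure: "(z, w) \<in> prod_topology (tower_space \<iota> z T) (fan_space \<kappa> w) closure_of C"
  obtain b where b: "\<And>a. a \<in> Field omega1 \<Longrightarrow> b a \<in> Field omega1 \<and> E a \<inter> T (b a) = {}"
    using disjoint by metis
  define J where "J = {a \<in> Field omega1. \<exists>p. (\<iota> p, \<kappa> (a, p)) \<in> C}"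
  have "J \<subseteq> (\<lambda>q. fst (inv \<kappa> (snd q))) ` C"
  proof
    fix a assume "a \<in> J"
    then obtain p where "(\<iota> p, \<kappa> (a, p)) \<in> C" unfolding J_def by blast
    then show "a \<in> (\<lambda>q. fst (inv \<kappa> (snd q))) ` C"
      by (rule rev_image_eqI) (simp add: inv_f_f[OF \<kappa>(1)])
  qed
  then have "countable J" by (rule countable_subset) (simp add: C(2))
  then have "countable (b ` J)" by simp
  moreover have "b ` J \<subseteq> Field omega1" using b by (auto simp: J_def)
  ultimately obtain g where g: "g \<in> Field omega1" "b ` J \<subseteq> underS omega1 g"
    by (rule countable_bounded_omega1)
  have "\<exists>m. \<forall>p\<in>E a \<inter> T g. p < m" if "a \<in> J" for a
  proof -
    have "finite (T g - T (b a))" using g that T unfolding omega1_tower_def by blast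
    moreover have "E a \<inter> T g \<subseteq> T g - T (b a)" using b that by (auto simp: J_def)
    ultimately have "finite (E a \<inter> T g)" by (rule finite_subset[rotated])
    then show ?thesis by (simp add: finite_nat_set_iff_bounded)
  qed
  then have "\<exists>f. \<forall>a\<in>J. \<forall>p\<in>E a \<inter> T g. p < f a" by (intro bchoice) blast
  then obtain f where f: "\<And>a p. a \<in> J \<Longrightarrow> p \<in> E a \<inter> T g \<Longrightarrow> p < f a" by blast
  define U where "U = insert z (\<iota> ` T g)"
  define V where "V = insert w (\<kappa> ` {(a, n). a \<in> Field omega1 \<and> f a \<le> n})"
  have "\<iota> ` (T g - {..<0}) \<in> tower_base \<iota> T"
    unfolding tower_base_def using g(1) by blast
  then have U: "openin (tower_space \<iota> z T) U"
    unfolding openin_filter_space[OF baseX] U_def by auto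
  have "\<kappa> ` {(a, n). a \<in> Field omega1 \<and> f a \<le> n} \<in> fan_base \<kappa>"
    unfolding fan_base_def by (rule rangeI)
  then have V: "openin (fan_space \<kappa> w) V"
    unfolding openin_filter_space[OF baseY] V_def by auto
  have "openin (prod_topology (tower_space \<iota> z T) (fan_space \<kappa> w)) (U \<times> V)"
    using U V by (simp add: openin_prod_Times_iff)
  moreover have "z \<in> U" "w \<in> V" unfolding U_def V_def by (rule insertI1)+
  ultimately obtain q where "q \<in> C" "q \<in> U \<times> V"
    using closure[unfolded in_closure_of] by (meson mem_Sigma_iff)
  then obtain a p where q: "q = (\<iota> p, \<kappa> (a, p))" "a \<in> Field omega1" "p \<in> E a" "q \<in> U \<times> V"
    using C(1) unfolding tower_fan_diagonal_def by blast
  have "a \<in> J" using q \<open>q \<in> C\<close> by (auto simp: J_def)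
  have "p \<in> T g" using q(1,4) \<iota> by (auto simp: U_def inj_image_mem_iff)
  moreover have "f a \<le> p" using q(1,4) \<kappa> by (auto simp: V_def inj_image_mem_iff)
  ultimately show False using f[OF \<open>a \<in> J\<close>] q(3) by fastforce
qed

lemma not_countably_tight_prod_tower_fan:
  "\<not> countably_tight (prod_topology (tower_space \<iota> z T) (fan_space \<kappa> w))"
proof
  assume tight: "countably_tight (prod_topology (tower_space \<iota> z T) (fan_space \<kappa> w))"
  have "\<exists>b. b \<in> Field omega1 \<and> a \<in> underS omega1 b" if "a \<in> Field omega1" for a
    using countable_bounded_omega1[of "{a}"] that by blast
  then obtain succ where succ: "\<And>a. a \<in> Field omega1 \<Longrightarrow> succ a \<in> Field omega1 \<and> a \<in> underS omega1 (succ a)"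
    by metis
  define E where "E a = T a - T (succ a)" for a
  have "E a \<subseteq> T a \<and> infinite (E a)" if "a \<in> Field omega1" for a
    using succ[OF that] T unfolding omega1_tower_def E_def by blast
  then have "(z, w) \<in> prod_topology (tower_space \<iota> z T) (fan_space \<kappa> w) closure_of tower_fan_diagonal \<iota> \<kappa> E"
    by (rule in_closure_of_tower_fan_diagonal)
  moreover have "tower_fan_diagonal \<iota> \<kappa> E \<subseteq> topspace (prod_topology (tower_space \<iota> z T) (fan_space \<kappa> w))"
    by (auto simp: tower_fan_diagonal_def topspace_filter_space[OF free_filter_base_tower[OF \<iota> T]]
        topspace_filter_space[OF free_filter_base_fan[OF \<kappa>]])
  ultimately obtain C where "C \<subseteq> tower_fan_diagonal \<iota> \<kappa> E" "countable C"
    "(z, w) \<in> prod_topology (tower_space \<iota> z T) (fan_space \<kappa> w) closure_of C"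
    using tight unfolding countably_tight_def by blast
  moreover have "\<exists>b\<in>Field omega1. E a \<inter> T b = {}" if "a \<in> Field omega1" for a
    using succ[OF that] unfolding E_def by blast
  ultimately show False using not_in_closure_of_countable_tower_fan_diagonal by blast
qed

end

lemma not_playerI_wins_G1_Omega_tower_space:
  assumes "covM_gt_aleph1" "inj \<iota>" "z \<notin> range \<iota>" "omega1_tower T"
    and "x \<in> topspace (tower_space \<iota> z T)"
  shows "\<not> playerI_wins_G1_Omega (tower_space \<iota> z T) x"
proof (rule not_playerI_wins_G1_Omega_filter_space)
  show base: "free_filter_base (range \<iota>) z (tower_base \<iota> T)"
    using assms(2-4) by (rule free_filter_base_tower)
  show "|tower_base \<iota> T| \<le>o omega1"
    unfolding tower_base_def by (rule ordLeq_transitive[OF card_of_image card_of_Field_omega1_times_nat])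
  show "x \<in> insert z (range \<iota>)"
    using assms(5) by (simp add: topspace_filter_space[OF base])
qed (simp_all add: assms(1))

definition nat_code :: "nat \<Rightarrow> real set set" where
  "nat_code n = {{real n}}"

definition pair_code :: "nat set \<times> nat \<Rightarrow> real set set" where
  "pair_code = (\<lambda>(a, n). insert {- 1 - real n} ((\<lambda>m. {real m}) ` a))"

lemma inj_nat_code: "inj nat_code"
  by (rule injI) (simp add: nat_code_def)

lemma empty_notin_range_nat_code: "{} \<notin> range nat_code"
  by (auto simp: nat_code_def)

lemma inj_pair_code: "inj pair_code"
proof (rule injI)
  fix p q assume eq: "pair_code p = pair_code q"
  have ones: "{real m} \<in> pair_code (a, n) \<longleftrightarrow> m \<in> a"
    and negatives: "{- 1 - real k} \<in> pair_code (a, n) \<longleftrightarrow> k = n" for a n m k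
    by (auto simp: pair_code_def)
  obtain a n a' n' where pq: "p = (a, n)" "q = (a', n')" by fastforce
  have "a = a'" using ones[of _ a n] ones[of _ a' n'] eq pq by blast
  moreover have "n = n'" using negatives[of n a n] negatives[of n a' n'] eq pq by simp
  ultimately show "p = q" using pq by simp
qed

lemma empty_notin_range_pair_code: "{} \<notin> range pair_code"
  by (auto simp: pair_code_def)

theorem proposition4p5:
  assumes "covM_gt_aleph1"
  shows "\<exists>X :: real set set topology.
           tychonoff_space X \<and>
           \<not> productively_countably_tight_wrt TYPE(real set set) X \<and>
           (\<forall>x\<in>topspace X. \<not> playerI_wins_G1_Omega X x)"
proof -
  obtain T where T: "omega1_tower T" using exists_omega1_tower by blast
  note nat_code = inj_nat_code empty_notin_range_nat_code
    and pair_code = inj_pair_code empty_notin_range_pair_code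
  show ?thesis
  proof (intro exI conjI ballI)
    show "tychonoff_space (tower_space nat_code {} T)"
      by (rule tychonoff_space_filter_space[OF free_filter_base_tower[OF nat_code T]])
    show "\<not> productively_countably_tight_wrt TYPE(real set set) (tower_space nat_code {} T)"
      unfolding productively_countably_tight_wrt_def
      using countably_tight_fan[OF pair_code] not_countably_tight_prod_tower_fan[OF nat_code T pair_code]
      by blast
    show "\<not> playerI_wins_G1_Omega (tower_space nat_code {} T) x"
      if "x \<in> topspace (tower_space nat_code {} T)" for x
      by (rule not_playerI_wins_G1_Omega_tower_space[OF assms nat_code T that])
  qed
qed

end
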